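(* Consider the linear regression case of the fixed-point system described in the context, i.e. $\tilde T(x)=x+\Phi^{-1}(e)$ and $A(x)=x^2/2$. Then for admissible constants $(v_B,c_B,c_{BB_\star})$ the quantities $r_1,r_2,r_3$ equal $$r_1=\frac{1}{\kappa(v_B-c_B)+1},\qquad r_2=-\frac{\kappa(v_B-c_B)}{\kappa(v_B-c_B)+1},\qquad r_3=\frac{\kappa(\gamma^2+c_B-2c_{BB_\star})+1}{(\kappa(v_B-c_B)+1)^2}.$$ Furthermore, if $\mu$ is the standard Gaussian distribution and $\pi$ is centered, then $$v_B=\frac{1}{r_1+1}+c_B,\qquad c_B=\frac{(r_2+1)^2\gamma^2+r_3}{(r_1+1)^2},\qquad c_{BB_\star}=\frac{(r_2+1)\gamma^2}{r_1+1},$$ and consequently (at the solution of the fixed-point system) $$r_1=r_2+1=\sqrt{(\kappa/2)^2+1}-\kappa/2 .$$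
   Context: Fix $\kappa>0$ and $\gamma>0$, and let $\pi$ be a probability measure on $\mathbb{R}$ with second moment $\gamma^2$; let $\mu$ be a probability measure on $\mathbb{R}$ (density also $\mu$). $\Phi$ is the standard Gaussian cdf. Linear regression model: observations $y_i=\mathbf X_i^\top\boldsymbol\beta_\star+z_i$ with $z_i$ i.i.d. $\mathcal N(0,1)$, corresponding to $\tilde T_i(x)=x+\Phi^{-1}(e_i)$, $e_i\sim\mathrm{Unif}[0,1]$, and $A(x)=x^2/2$. Fixed-point system. For admissible constants $v_B\ge c_B\ge0$, $c_{BB_\star}^2\le\gamma^2c_B$: let $\xi_{B_\star},z_{BB_\star}$ be i.i.d. $\mathcal N(0,1)$ and $e\sim\mathrm{Unif}[0,1]$ independent; $\tilde T(x):=x+\Phi^{-1}(e)$. If $c_B>0$, $\theta(\xi):=\sqrt{\kappa(v_B-c_B)}\xi+\sqrt{\kappa c_B}z_{BB_\star}$, $\theta_\star:=\sqrt{\kappa(\gamma^2-c_{BB_\star}^2/c_B)}\xi_{B_\star}+c_{BB_\star}\sqrt{\kappa/c_B}z_{BB_\star}$; if $c_B=0$, $\theta(\xi):=\sqrt{\kappa v_B}\xi$, $\theta_\star:=\sqrt\kappa\gamma\xi_{B_\star}$. Let $p_s(\xi)\propto\exp\{\tilde T(\theta_\star)\theta(\xi)-A(\theta(\xi))-\xi^2/2\}$, with expectation, variance, covariance $\langle\cdot\rangle_s,\mathrm{Var}_s,\mathrm{Cov}_s$, and $\mathbb{E}_{G\otimes e}$ the expectation over $(\xi_{B_\star},z_{BB_\star},e)$.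 With $S_{\theta_\star}(\xi):=\tilde T'(\theta_\star)\theta(\xi)$ and $S_\theta(\xi):=\tilde T(\theta_\star)-A'(\theta(\xi))$, define $r_1:=\mathbb{E}_{G\otimes e}[\langle A''(\theta(\xi))\rangle_s-\mathrm{Var}_s(S_\theta)]$, $r_2:=\mathbb{E}_{G\otimes e}[\mathrm{Cov}_s(S_{\theta_\star},S_\theta)]$, $r_3:=\mathbb{E}_{G\otimes e}[\langle S_\theta\rangle_s^2]$. Given $r_1,r_2,r_3$, let $t_\gamma:=\mathbb{E}[\tilde T'(\cdot)]=1$, $\alpha:=(r_2+t_\gamma)/r_1$, $\sigma:=\sqrt{r_3}/r_1$, $v:=1/r_1$; with $B_\star\sim\pi$, $Z\sim\mathcal N(0,1)$ independent, $m:=\alpha B_\star+\sigma Z$, let $p_h(db)\propto e^{-(b-m)^2/(2v)}\mu(db)$ with expectation $\langle\cdot\rangle_h$, and set $v_B=\mathbb{E}_{Z,B_\star}\langle\beta^2\rangle_h$, $c_B=\mathbb{E}_{Z,B_\star}\langle\beta\rangle_h^2$, $c_{BB_\star}=\mathbb{E}_{Z,B_\star}\langle\beta B_\star\rangle_h$. The fixed-point system consists of both sets of relations simultaneously. *)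

theory Defs
  imports "HOL-Probability.Probability"
begin

definition Phi :: "real \<Rightarrow> real" where
  "Phi x = (\<integral>t. indicator {..x} t * std_normal_density t \<partial>lborel)"

definition Phi_inv :: "real \<Rightarrow> real" where
  "Phi_inv p = (THE x. Phi x = p)"

definition gauss :: "real measure" where
  "gauss = density lborel std_normal_density"

definition unif01 :: "real measure" where
  "unif01 = uniform_measure lborel {0..1}"

text \<open>Expectation over independent (xi_Bstar, z_BBstar, e) with
  xi_Bstar, z_BBstar ~ N(0,1), e ~ Unif[0,1].\<close>
definition E_Ge :: "(real \<Rightarrow> real \<Rightarrow> real \<Rightarrow> real) \<Rightarrow> real" where
  "E_Ge f = integral\<^sup>L (gauss \<Otimes>\<^sub>M (gauss \<Otimes>\<^sub>M unif01)) (\<lambda>(xs, z, e). f xs z e)"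

definition theta :: "real \<Rightarrow> real \<Rightarrow> real \<Rightarrow> real \<Rightarrow> real \<Rightarrow> real" where
  "theta \<kappa> vB cB z \<xi> =
     (if cB > 0 then sqrt (\<kappa> * (vB - cB)) * \<xi> + sqrt (\<kappa> * cB) * z
      else sqrt (\<kappa> * vB) * \<xi>)"

definition theta_star :: "real \<Rightarrow> real \<Rightarrow> real \<Rightarrow> real \<Rightarrow> real \<Rightarrow> real \<Rightarrow> real" where
  "theta_star \<kappa> \<gamma> cB cBB xs z =
     (if cB > 0 then sqrt (\<kappa> * (\<gamma>\<^sup>2 - cBB\<^sup>2 / cB)) * xs + cBB * sqrt (\<kappa> / cB) * z
      else sqrt \<kappa> * \<gamma> * xs)"

text \<open>T e x is the random link T~(x) for the randomness e; A is the cumulant function.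
  Unnormalised density of p_s in xi, for fixed (xs, z, e).\<close>
definition s_weight ::
  "(real \<Rightarrow> real \<Rightarrow> real) \<Rightarrow> (real \<Rightarrow> real) \<Rightarrow> real \<Rightarrow> real \<Rightarrow> real \<Rightarrow> real \<Rightarrow> real
    \<Rightarrow> real \<Rightarrow> real \<Rightarrow> real \<Rightarrow> real \<Rightarrow> real" where
  "s_weight T A \<kappa> \<gamma> vB cB cBB xs z e \<xi> =
     exp (T e (theta_star \<kappa> \<gamma> cB cBB xs z) * theta \<kappa> vB cB z \<xi>
          - A (theta \<kappa> vB cB z \<xi>) - \<xi>\<^sup>2 / 2)"

definition s_avg ::
  "(real \<Rightarrow> real \<Rightarrow> real) \<Rightarrow> (real \<Rightarrow> real) \<Rightarrow> real \<Rightarrow> real \<Rightarrow> real \<Rightarrow> real \<Rightarrow> real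
    \<Rightarrow> real \<Rightarrow> real \<Rightarrow> real \<Rightarrow> (real \<Rightarrow> real) \<Rightarrow> real" where
  "s_avg T A \<kappa> \<gamma> vB cB cBB xs z e g =
     (\<integral>\<xi>. g \<xi> * s_weight T A \<kappa> \<gamma> vB cB cBB xs z e \<xi> \<partial>lborel)
     / (\<integral>\<xi>. s_weight T A \<kappa> \<gamma> vB cB cBB xs z e \<xi> \<partial>lborel)"

definition s_cov ::
  "(real \<Rightarrow> real \<Rightarrow> real) \<Rightarrow> (real \<Rightarrow> real) \<Rightarrow> real \<Rightarrow> real \<Rightarrow> real \<Rightarrow> real \<Rightarrow> real
    \<Rightarrow> real \<Rightarrow> real \<Rightarrow> real \<Rightarrow> (real \<Rightarrow> real) \<Rightarrow> (real \<Rightarrow> real) \<Rightarrow> real" where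
  "s_cov T A \<kappa> \<gamma> vB cB cBB xs z e f g =
     s_avg T A \<kappa> \<gamma> vB cB cBB xs z e (\<lambda>\<xi>. f \<xi> * g \<xi>)
     - s_avg T A \<kappa> \<gamma> vB cB cBB xs z e f * s_avg T A \<kappa> \<gamma> vB cB cBB xs z e g"

definition s_var ::
  "(real \<Rightarrow> real \<Rightarrow> real) \<Rightarrow> (real \<Rightarrow> real) \<Rightarrow> real \<Rightarrow> real \<Rightarrow> real \<Rightarrow> real \<Rightarrow> real
    \<Rightarrow> real \<Rightarrow> real \<Rightarrow> real \<Rightarrow> (real \<Rightarrow> real) \<Rightarrow> real" where
  "s_var T A \<kappa> \<gamma> vB cB cBB xs z e f = s_cov T A \<kappa> \<gamma> vB cB cBB xs z e f f"

definition S_theta_star ::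
  "(real \<Rightarrow> real \<Rightarrow> real) \<Rightarrow> real \<Rightarrow> real \<Rightarrow> real \<Rightarrow> real \<Rightarrow> real \<Rightarrow> real
    \<Rightarrow> real \<Rightarrow> real \<Rightarrow> real \<Rightarrow> real" where
  "S_theta_star T \<kappa> \<gamma> vB cB cBB xs z e \<xi> =
     deriv (T e) (theta_star \<kappa> \<gamma> cB cBB xs z) * theta \<kappa> vB cB z \<xi>"

definition S_theta ::
  "(real \<Rightarrow> real \<Rightarrow> real) \<Rightarrow> (real \<Rightarrow> real) \<Rightarrow> real \<Rightarrow> real \<Rightarrow> real \<Rightarrow> real \<Rightarrow> real
    \<Rightarrow> real \<Rightarrow> real \<Rightarrow> real \<Rightarrow> real \<Rightarrow> real" where
  "S_theta T A \<kappa> \<gamma> vB cB cBB xs z e \<xi> =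
     T e (theta_star \<kappa> \<gamma> cB cBB xs z) - deriv A (theta \<kappa> vB cB z \<xi>)"

definition r1 ::
  "(real \<Rightarrow> real \<Rightarrow> real) \<Rightarrow> (real \<Rightarrow> real) \<Rightarrow> real \<Rightarrow> real \<Rightarrow> real \<Rightarrow> real \<Rightarrow> real \<Rightarrow> real" where
  "r1 T A \<kappa> \<gamma> vB cB cBB = E_Ge (\<lambda>xs z e.
     s_avg T A \<kappa> \<gamma> vB cB cBB xs z e (\<lambda>\<xi>. deriv (deriv A) (theta \<kappa> vB cB z \<xi>))
     - s_var T A \<kappa> \<gamma> vB cB cBB xs z e (S_theta T A \<kappa> \<gamma> vB cB cBB xs z e))"

definition r2 ::
  "(real \<Rightarrow> real \<Rightarrow> real) \<Rightarrow> (real \<Rightarrow> real) \<Rightarrow> real \<Rightarrow> real \<Rightarrow> real \<Rightarrow> real \<Rightarrow> real \<Rightarrow> real" where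
  "r2 T A \<kappa> \<gamma> vB cB cBB = E_Ge (\<lambda>xs z e.
     s_cov T A \<kappa> \<gamma> vB cB cBB xs z e (S_theta_star T \<kappa> \<gamma> vB cB cBB xs z e)
        (S_theta T A \<kappa> \<gamma> vB cB cBB xs z e))"

definition r3 ::
  "(real \<Rightarrow> real \<Rightarrow> real) \<Rightarrow> (real \<Rightarrow> real) \<Rightarrow> real \<Rightarrow> real \<Rightarrow> real \<Rightarrow> real \<Rightarrow> real \<Rightarrow> real" where
  "r3 T A \<kappa> \<gamma> vB cB cBB = E_Ge (\<lambda>xs z e.
     (s_avg T A \<kappa> \<gamma> vB cB cBB xs z e (S_theta T A \<kappa> \<gamma> vB cB cBB xs z e))\<^sup>2)"

definition T_lin :: "real \<Rightarrow> real \<Rightarrow> real" where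
  "T_lin e x = x + Phi_inv e"

definition A_lin :: "real \<Rightarrow> real" where
  "A_lin x = x\<^sup>2 / 2"

definition h_avg :: "real measure \<Rightarrow> real \<Rightarrow> real \<Rightarrow> (real \<Rightarrow> real) \<Rightarrow> real" where
  "h_avg \<mu> m v g =
     (\<integral>b. g b * exp (- (b - m)\<^sup>2 / (2 * v)) \<partial>\<mu>) / (\<integral>b. exp (- (b - m)\<^sup>2 / (2 * v)) \<partial>\<mu>)"

definition h_alpha :: "real \<Rightarrow> real \<Rightarrow> real \<Rightarrow> real" where
  "h_alpha t\<gamma> q1 q2 = (q2 + t\<gamma>) / q1"

definition h_sigma :: "real \<Rightarrow> real \<Rightarrow> real" where
  "h_sigma q1 q3 = sqrt q3 / q1"

definition h_m :: "real \<Rightarrow> real \<Rightarrow> real \<Rightarrow> real \<Rightarrow> real \<Rightarrow> real \<Rightarrow> real" where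
  "h_m t\<gamma> q1 q2 q3 Bs Z = h_alpha t\<gamma> q1 q2 * Bs + h_sigma q1 q3 * Z"

definition E_ZB :: "real measure \<Rightarrow> (real \<Rightarrow> real \<Rightarrow> real) \<Rightarrow> real" where
  "E_ZB \<pi> f = integral\<^sup>L (gauss \<Otimes>\<^sub>M \<pi>) (\<lambda>(Z, Bs). f Z Bs)"

definition h_vB :: "real measure \<Rightarrow> real measure \<Rightarrow> real \<Rightarrow> real \<Rightarrow> real \<Rightarrow> real \<Rightarrow> real" where
  "h_vB \<pi> \<mu> t\<gamma> q1 q2 q3 = E_ZB \<pi> (\<lambda>Z Bs.
     h_avg \<mu> (h_m t\<gamma> q1 q2 q3 Bs Z) (1 / q1) (\<lambda>b. b\<^sup>2))"

definition h_cB :: "real measure \<Rightarrow> real measure \<Rightarrow> real \<Rightarrow> real \<Rightarrow> real \<Rightarrow> real \<Rightarrow> real" where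
  "h_cB \<pi> \<mu> t\<gamma> q1 q2 q3 = E_ZB \<pi> (\<lambda>Z Bs.
     (h_avg \<mu> (h_m t\<gamma> q1 q2 q3 Bs Z) (1 / q1) (\<lambda>b. b))\<^sup>2)"

definition h_cBB :: "real measure \<Rightarrow> real measure \<Rightarrow> real \<Rightarrow> real \<Rightarrow> real \<Rightarrow> real \<Rightarrow> real" where
  "h_cBB \<pi> \<mu> t\<gamma> q1 q2 q3 = E_ZB \<pi> (\<lambda>Z Bs.
     h_avg \<mu> (h_m t\<gamma> q1 q2 q3 Bs Z) (1 / q1) (\<lambda>b. b * Bs))"

end

theory Submission
  imports Defs
begin

text \<open>In the linear model the exponent of \<open>p\<^sub>s\<close> is quadratic in \<open>\<xi>\<close>, so \<open>p\<^sub>s\<close> is Gaussian with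
  precision \<open>1 + \<kappa>(v\<^sub>B - c\<^sub>B)\<close>. The scores \<open>S\<^sub>\<theta>\<close> and \<open>S\<^sub>\<theta>\<^sub>\<star>\<close> are affine in \<open>\<xi>\<close>, hence the integrands
  of \<open>r\<^sub>1\<close> and \<open>r\<^sub>2\<close> are constant, while \<open>\<langle>S\<^sub>\<theta>\<rangle>\<^sub>s\<close> is, up to the factor \<open>1 / (1 + \<kappa>(v\<^sub>B - c\<^sub>B))\<close>,
  a centred Gaussian combination of \<open>\<xi>\<^sub>B\<^sub>\<star>, z\<^sub>B\<^sub>B\<^sub>\<star>\<close> of variance \<open>\<kappa>(\<gamma>\<^sup>2 + c\<^sub>B - 2c\<^sub>B\<^sub>B\<^sub>\<star>)\<close> plus the
  independent noise \<open>\<Phi>\<^sup>-\<^sup>1(e)\<close>, which is standard normal by the probability integral transform.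
  With \<open>\<mu>\<close> standard normal, \<open>p\<^sub>h\<close> is Gaussian as well, with mean \<open>r\<^sub>1 m / (r\<^sub>1 + 1)\<close> and variance
  \<open>1 / (r\<^sub>1 + 1)\<close>. At a fixed point \<open>v\<^sub>B - c\<^sub>B = 1 / (r\<^sub>1 + 1)\<close>, so \<open>r\<^sub>1 = 1 / (\<kappa> / (r\<^sub>1 + 1) + 1)\<close>,
  i.e. \<open>r\<^sub>1\<^sup>2 + \<kappa> r\<^sub>1 - 1 = 0\<close>.\<close>

lemma integral_quadratic_normal_density:
  fixes m s c0 c1 c2 :: real
  assumes "0 < s"
  shows "(\<integral>x. (c0 + c1 * x + c2 * x\<^sup>2) * normal_density m s x \<partial>lborel) = c0 + c1 * m + c2 * (m\<^sup>2 + s\<^sup>2)"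
proof -
  have centred: "(c0 + c1 * x + c2 * x\<^sup>2) * normal_density m s x =
      (c0 + c1 * m + c2 * m\<^sup>2) * (normal_density m s x * (x - m) ^ (2 * 0))
      + (c1 + 2 * c2 * m) * (normal_density m s x * (x - m) ^ (2 * 0 + 1))
      + c2 * (normal_density m s x * (x - m) ^ (2 * 1))" for x
    by (simp add: power2_eq_square algebra_simps)
  have "has_bochner_integral lborel (\<lambda>x. (c0 + c1 * x + c2 * x\<^sup>2) * normal_density m s x)
      ((c0 + c1 * m + c2 * m\<^sup>2) * 1 + (c1 + 2 * c2 * m) * 0 + c2 * (fact (2 * 1) / ((2 / s\<^sup>2) ^ 1 * fact 1)))"
    unfolding centred using assms
    by (intro has_bochner_integral_add has_bochner_integral_mult_right normal_moment_odd)
       (use normal_moment_even[of s m 0] normal_moment_even[of s m 1] in auto)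
  then show ?thesis
    using assms by (auto dest: has_bochner_integral_integral_eq simp: algebra_simps)
qed

lemma gaussian_weight_average_quadratic:
  fixes A B C D c0 c1 c2 :: real and w g :: "real \<Rightarrow> real"
  assumes A: "0 < A" and D: "0 < D"
    and w: "\<And>x. w x = D * exp (- (A * x\<^sup>2) / 2 + B * x + C)"
    and g: "\<And>x. g x = c0 + c1 * x + c2 * x\<^sup>2"
  shows "(\<integral>x. g x * w x \<partial>lborel) / (\<integral>x. w x \<partial>lborel) = c0 + c1 * (B / A) + c2 * ((B / A)\<^sup>2 + 1 / A)"
proof -
  define s where "s = 1 / sqrt A"
  define m where "m = B / A"
  define K where "K = D * exp (C + B\<^sup>2 / (2 * A)) * sqrt (2 * pi / A)"
  have s: "0 < s" and s2: "s\<^sup>2 = 1 / A"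
    using A by (simp_all add: s_def power_divide)
  have K: "0 < K" using A D by (simp add: K_def)
  have w_normal: "w x = K * normal_density m s x" for x
  proof -
    have square: "- (A * x\<^sup>2) / 2 + B * x + C = (C + B\<^sup>2 / (2 * A)) + (- (x - m)\<^sup>2 / (2 * s\<^sup>2))"
      using A unfolding s2 m_def by (simp add: field_simps power2_eq_square)
    have "sqrt (2 * pi / A) * (1 / sqrt (2 * pi * s\<^sup>2)) = 1"
      using A unfolding s2 by (simp add: real_sqrt_divide)
    then show ?thesis
      unfolding w normal_density_def K_def square exp_add using A by (simp add: algebra_simps)
  qed
  have "(\<integral>x. g x * w x \<partial>lborel) = K * (c0 + c1 * m + c2 * (m\<^sup>2 + s\<^sup>2))"
    unfolding g w_normal using integral_quadratic_normal_density[OF s] by (simp add: mult.left_commute)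
  moreover have "(\<integral>x. w x \<partial>lborel) = K"
    unfolding w_normal using s by simp
  ultimately show ?thesis
    using K by (simp add: m_def s2)
qed

section \<open>The standard Gaussian measure and its quantile function\<close>

lemma prob_space_gauss: "prob_space gauss"
  unfolding gauss_def by (rule prob_space_normal_density) simp

lemma sets_gauss [measurable_cong]: "sets gauss = sets borel"
  unfolding gauss_def by simp

lemma real_distribution_gauss: "real_distribution gauss"
  unfolding real_distribution_def real_distribution_axioms_def using prob_space_gauss sets_gauss by simp

interpretation gauss: real_distribution gauss
  by (rule real_distribution_gauss)

lemma gauss_moments:
  "integrable gauss (\<lambda>x. x)" "(\<integral>x. x \<partial>gauss) = 0"
  "integrable gauss (\<lambda>x. x\<^sup>2)" "(\<integral>x. x\<^sup>2 \<partial>gauss) = 1"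
  using integrable_std_normal_moment[of 1] integral_std_normal_moment_odd[of 0]
    integrable_std_normal_moment[of 2] integral_std_normal_moment_even[of 1]
  unfolding gauss_def by (simp_all add: integrable_density integral_density)

lemma measure_gauss_interval_pos:
  assumes "x < y"
  shows "0 < measure gauss {x<..y}"
proof -
  have "{x<..y} \<notin> null_sets lborel"
    using assms by (auto simp: null_sets_def)
  moreover have "{x<..y} \<in> null_sets lborel"
    if "AE t in lborel. t \<in> {x<..y} \<longrightarrow> std_normal_density t = 0"
  proof -
    from that have "AE t in lborel. t \<notin> {x<..y}"
      by eventually_elim (metis normal_density_pos zero_less_one less_irrefl)
    then show ?thesis
      by (subst AE_iff_null_sets) auto
  qed
  ultimately have "{x<..y} \<notin> null_sets gauss"
    unfolding gauss_def by (subst null_sets_density_iff) auto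
  then show ?thesis
    using gauss.emeasure_eq_measure by (auto simp: null_sets_def zero_less_measure_iff)
qed

lemma Phi_eq_cdf: "Phi = cdf gauss"
proof
  fix x
  have "Phi x = (\<integral>t. indicator {..x} t \<partial>gauss)"
    unfolding Phi_def gauss_def by (subst integral_density) (auto simp: mult.commute)
  then show "Phi x = cdf gauss x"
    by (simp add: cdf_def gauss_def)
qed

lemma strict_mono_Phi: "strict_mono Phi"
  by (rule strict_monoI)
     (use gauss.cdf_diff_eq measure_gauss_interval_pos in \<open>fastforce simp: Phi_eq_cdf\<close>)

lemma isCont_Phi: "isCont Phi x"
proof -
  have "emeasure gauss {x} = 0"
    unfolding gauss_def by (subst emeasure_density) auto
  then show ?thesis
    unfolding Phi_eq_cdf gauss.isCont_cdf by (simp add: measure_def)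
qed

lemma Phi_bounds: "0 < Phi x" "Phi x < 1"
  using strict_mono_Phi[THEN strict_monoD, of "x - 1" x] strict_mono_Phi[THEN strict_monoD, of x "x + 1"]
    gauss.cdf_nonneg[of "x - 1"] gauss.cdf_bounded_prob[of "x + 1"]
  unfolding Phi_eq_cdf by simp_all

lemma Phi_surj:
  assumes "0 < p" "p < 1"
  obtains x where "Phi x = p"
proof -
  have "eventually (\<lambda>x. Phi x < p) at_bot" "eventually (\<lambda>x. p < Phi x) at_top"
    using gauss.cdf_lim_at_bot gauss.cdf_lim_at_top_prob assms
    unfolding Phi_eq_cdf by (simp_all add: order_tendstoD)
  then obtain a b where "Phi a < p" "p < Phi b"
    by (metis eventually_at_bot_linorder eventually_at_top_linorder order_refl)
  moreover from this have "a \<le> b"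
    using strict_mono_less_eq[OF strict_mono_Phi] by (meson less_trans not_le order.strict_implies_order)
  ultimately show ?thesis
    using IVT'[of Phi a p b] isCont_Phi that by (auto intro: continuous_at_imp_continuous_on)
qed

lemma Phi_inv_Phi [simp]: "Phi_inv (Phi x) = x"
  unfolding Phi_inv_def using strict_mono_eq[OF strict_mono_Phi] by auto

lemma Phi_Phi_inv:
  assumes "0 < p" "p < 1"
  shows "Phi (Phi_inv p) = p"
  using Phi_surj[OF assms] by (metis Phi_inv_Phi)

text \<open>Outside \<open>]0, 1[\<close> the definite description in \<open>Phi_inv\<close> has no witness, so there
  \<open>Phi_inv\<close> takes the single junk value \<open>Phi_inv 0\<close>.\<close>
lemma Phi_inv_outside:
  assumes "p \<notin> {0<..<1}"
  shows "Phi_inv p = Phi_inv 0"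
proof -
  have "Phi x \<noteq> p" "Phi x \<noteq> 0" for x
    using Phi_bounds[of x] assms by auto
  then show ?thesis
    unfolding Phi_inv_def by metis
qed

lemma mono_on_Phi_inv: "mono_on {0<..<1} Phi_inv"
proof (rule mono_onI)
  fix p q :: real
  assume "p \<in> {0<..<1}" "q \<in> {0<..<1}" "p \<le> q"
  then have "Phi (Phi_inv p) \<le> Phi (Phi_inv q)"
    by (simp add: Phi_Phi_inv)
  then show "Phi_inv p \<le> Phi_inv q"
    by (simp add: strict_mono_less_eq[OF strict_mono_Phi])
qed

lemma borel_measurable_Phi_inv [measurable]: "Phi_inv \<in> borel_measurable borel"
proof (rule borel_measurable_piecewise_mono[of "{{0<..<1}, - {0<..<1}}"])
  have "mono_on (- {0<..<1}) Phi_inv"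
    by (rule mono_onI) (metis ComplD Phi_inv_outside order_refl)
  then show "mono_on c Phi_inv" if "c \<in> {{0<..<1}, - {0<..<1}}" for c
    using that mono_on_Phi_inv by blast
qed auto

lemma borel_measurable_Phi [measurable]: "Phi \<in> borel_measurable borel"
  by (rule borel_measurable_continuous_onI) (simp add: isCont_Phi continuous_at_imp_continuous_on)

lemma prob_space_unif01: "prob_space unif01"
  unfolding unif01_def by (rule prob_space_uniform_measure) auto

lemma real_distribution_unif01: "real_distribution unif01"
  unfolding real_distribution_def real_distribution_axioms_def using prob_space_unif01
  by (simp add: unif01_def)

lemma cdf_unif01: "cdf unif01 t = max 0 (min 1 t)"
proof -
  have "cdf unif01 t = measure lborel ({0..1} \<inter> {..t})"
    unfolding cdf_def unif01_def by (subst measure_uniform_measure) auto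
  also have "\<dots> = max 0 (min 1 t)"
  proof (cases "0 \<le> t")
    case True
    then have "{0..1} \<inter> {..t} = {0..min 1 t}" by auto
    then show ?thesis using True by simp
  qed simp
  finally show ?thesis .
qed

lemma distr_gauss_Phi: "distr gauss borel Phi = unif01"
proof (rule cdf_unique)
  show "real_distribution (distr gauss borel Phi)"
    by (rule gauss.real_distribution_distr) simp
  show "cdf (distr gauss borel Phi) = cdf unif01"
  proof
    fix t
    have "cdf (distr gauss borel Phi) t = measure gauss {x. Phi x \<le> t}"
      unfolding cdf_def by (subst measure_distr) (auto simp: vimage_def)
    also have "\<dots> = max 0 (min 1 t)"
    proof -
      consider "t \<le> 0" | "0 < t" "t < 1" | "1 \<le> t" by linarith
      then show ?thesis
      proof cases
        case 1
        then have "{x. Phi x \<le> t} = {}"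
          using Phi_bounds(1) by (auto simp: not_le intro: order.strict_trans1)
        then show ?thesis using 1 by simp
      next
        case 2
        then have "Phi x \<le> t \<longleftrightarrow> x \<le> Phi_inv t" for x
          using strict_mono_less_eq[OF strict_mono_Phi, of x "Phi_inv t"] Phi_Phi_inv[of t] by simp
        then have "{x. Phi x \<le> t} = {..Phi_inv t}"
          by auto
        then show ?thesis
          using 2 Phi_Phi_inv[of t] by (simp add: Phi_eq_cdf cdf_def)
      next
        case 3
        then have "{x. Phi x \<le> t} = space gauss"
          using Phi_bounds(2) by (auto simp: gauss.borel_UNIV intro: less_imp_le order.strict_trans2)
        then show ?thesis using 3 gauss.prob_space by simp
      qed
    qed
    finally show "cdf (distr gauss borel Phi) t = cdf unif01 t"
      by (simp add: cdf_unif01)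
  qed
qed (rule real_distribution_unif01)

lemma
  fixes f :: "real \<Rightarrow> real"
  assumes [measurable]: "f \<in> borel_measurable borel"
  shows integrable_unif01_Phi_inv_iff: "integrable unif01 (\<lambda>e. f (Phi_inv e)) \<longleftrightarrow> integrable gauss f"
    and integral_unif01_Phi_inv: "(\<integral>e. f (Phi_inv e) \<partial>unif01) = (\<integral>x. f x \<partial>gauss)"
proof -
  have "Phi \<in> measurable gauss borel" "(\<lambda>e. f (Phi_inv e)) \<in> borel_measurable borel"
    by measurable
  then show "integrable unif01 (\<lambda>e. f (Phi_inv e)) \<longleftrightarrow> integrable gauss f"
    and "(\<integral>e. f (Phi_inv e) \<partial>unif01) = (\<integral>x. f x \<partial>gauss)"
    unfolding distr_gauss_Phi[symmetric] by (simp_all only: integrable_distr_eq integral_distr Phi_inv_Phi)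
qed

lemma unif01_Phi_inv_moments:
  "integrable unif01 Phi_inv" "(\<integral>e. Phi_inv e \<partial>unif01) = 0"
  "integrable unif01 (\<lambda>e. (Phi_inv e)\<^sup>2)" "(\<integral>e. (Phi_inv e)\<^sup>2 \<partial>unif01) = 1"
proof -
  have "(\<lambda>x::real. x) \<in> borel_measurable borel" "(\<lambda>x::real. x\<^sup>2) \<in> borel_measurable borel"
    by simp_all
  note transfer = integrable_unif01_Phi_inv_iff[OF this(1)] integral_unif01_Phi_inv[OF this(1)]
    integrable_unif01_Phi_inv_iff[OF this(2)] integral_unif01_Phi_inv[OF this(2)]
  show "integrable unif01 Phi_inv" "(\<integral>e. Phi_inv e \<partial>unif01) = 0"
    "integrable unif01 (\<lambda>e. (Phi_inv e)\<^sup>2)" "(\<integral>e. (Phi_inv e)\<^sup>2 \<partial>unif01) = 1"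
    using transfer gauss_moments by simp_all
qed

section \<open>Independent sums on product probability spaces\<close>

lemma pair_prob_spaceI: "prob_space M1 \<Longrightarrow> prob_space M2 \<Longrightarrow> pair_prob_space M1 M2"
  by (simp add: pair_prob_space_def pair_sigma_finite_def prob_space_imp_sigma_finite)

context pair_sigma_finite
begin

lemma
  fixes f :: "'a \<Rightarrow> real" and g :: "'b \<Rightarrow> real"
  assumes f: "integrable M1 f" and g: "integrable M2 g"
  shows integrable_product_mult: "integrable (M1 \<Otimes>\<^sub>M M2) (\<lambda>(x, y). f x * g y)"
    and integral_product_mult: "(\<integral>(x, y). f x * g y \<partial>(M1 \<Otimes>\<^sub>M M2)) = (\<integral>x. f x \<partial>M1) * (\<integral>y. g y \<partial>M2)"
proof -
  have [measurable]: "f \<in> borel_measurable M1" "g \<in> borel_measurable M2"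
    using f g by auto
  show integrable: "integrable (M1 \<Otimes>\<^sub>M M2) (\<lambda>(x, y). f x * g y)"
  proof (rule Fubini_integrable)
    have "integrable M1 (\<lambda>x. norm (f x) * (\<integral>y. norm (g y) \<partial>M2))"
      using f by (intro integrable_mult_left integrable_norm)
    then show "integrable M1 (\<lambda>x. \<integral>y. norm ((\<lambda>(x, y). f x * g y) (x, y)) \<partial>M2)"
      by (simp add: abs_mult)
  qed (use g in auto)
  show "(\<integral>(x, y). f x * g y \<partial>(M1 \<Otimes>\<^sub>M M2)) = (\<integral>x. f x \<partial>M1) * (\<integral>y. g y \<partial>M2)"
    using integral_fst'[OF integrable] by simp
qed

end

context pair_prob_space
begin

lemma
  fixes X :: "'a \<Rightarrow> real" and Y :: "'b \<Rightarrow> real"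
  assumes X: "integrable M1 X" and Y: "integrable M2 Y"
  shows integrable_product_add: "integrable (M1 \<Otimes>\<^sub>M M2) (\<lambda>(x, y). X x + Y y)"
    and integral_product_add: "(\<integral>(x, y). X x + Y y \<partial>(M1 \<Otimes>\<^sub>M M2)) = (\<integral>x. X x \<partial>M1) + (\<integral>y. Y y \<partial>M2)"
proof -
  have one: "integrable M1 (\<lambda>_. 1::real)" "integrable M2 (\<lambda>_. 1::real)"
    by auto
  have sum: "(\<lambda>(x, y). X x + Y y) = (\<lambda>p. (\<lambda>(x, y). X x * 1) p + (\<lambda>(x, y). 1 * Y y) p)"
    by auto
  note summands = integrable_product_mult[OF X one(2)] integrable_product_mult[OF one(1) Y]
  show "integrable (M1 \<Otimes>\<^sub>M M2) (\<lambda>(x, y). X x + Y y)"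
    unfolding sum using summands by (rule Bochner_Integration.integrable_add)
  show "(\<integral>(x, y). X x + Y y \<partial>(M1 \<Otimes>\<^sub>M M2)) = (\<integral>x. X x \<partial>M1) + (\<integral>y. Y y \<partial>M2)"
    unfolding sum using summands integral_product_mult[OF X one(2)] integral_product_mult[OF one(1) Y]
    by (simp add: M1.prob_space M2.prob_space)
qed

lemma
  fixes X :: "'a \<Rightarrow> real" and Y :: "'b \<Rightarrow> real"
  assumes X: "integrable M1 X" "integrable M1 (\<lambda>x. (X x)\<^sup>2)"
    and Y: "integrable M2 Y" "integrable M2 (\<lambda>y. (Y y)\<^sup>2)"
  shows integrable_product_add_square: "integrable (M1 \<Otimes>\<^sub>M M2) (\<lambda>(x, y). (X x + Y y)\<^sup>2)"
    and integral_product_add_square: "(\<integral>(x, y). (X x + Y y)\<^sup>2 \<partial>(M1 \<Otimes>\<^sub>M M2))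
          = (\<integral>x. (X x)\<^sup>2 \<partial>M1) + 2 * (\<integral>x. X x \<partial>M1) * (\<integral>y. Y y \<partial>M2) + (\<integral>y. (Y y)\<^sup>2 \<partial>M2)"
proof -
  have one: "integrable M1 (\<lambda>_. 1::real)" "integrable M2 (\<lambda>_. 1::real)"
    by auto
  have square: "(\<lambda>(x, y). (X x + Y y)\<^sup>2)
      = (\<lambda>p. (\<lambda>(x, y). (X x)\<^sup>2 * 1) p + 2 * (\<lambda>(x, y). X x * Y y) p + (\<lambda>(x, y). 1 * (Y y)\<^sup>2) p)"
    by (auto simp: power2_eq_square algebra_simps)
  note summands = integrable_product_mult[OF X(2) one(2)] integrable_product_mult[OF X(1) Y(1)]
    integrable_product_mult[OF one(1) Y(2)]
  show "integrable (M1 \<Otimes>\<^sub>M M2) (\<lambda>(x, y). (X x + Y y)\<^sup>2)"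
    unfolding square using summands
    by (intro Bochner_Integration.integrable_add Bochner_Integration.integrable_mult_right)
  show "(\<integral>(x, y). (X x + Y y)\<^sup>2 \<partial>(M1 \<Otimes>\<^sub>M M2))
      = (\<integral>x. (X x)\<^sup>2 \<partial>M1) + 2 * (\<integral>x. X x \<partial>M1) * (\<integral>y. Y y \<partial>M2) + (\<integral>y. (Y y)\<^sup>2 \<partial>M2)"
    unfolding square using summands integral_product_mult[OF X(2) one(2)] integral_product_mult[OF X(1) Y(1)]
      integral_product_mult[OF one(1) Y(2)]
    by (simp add: M1.prob_space M2.prob_space)
qed

end

section \<open>The \<open>s\<close>-side in the linear model\<close>

lemma deriv_A_lin [simp]: "deriv A_lin = (\<lambda>x. x)"
  unfolding A_lin_def
  by (rule ext, rule DERIV_imp_deriv) (auto intro!: derivative_eq_intros)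

lemma deriv_T_lin [simp]: "deriv (T_lin e) x = 1"
  unfolding T_lin_def by (rule DERIV_imp_deriv) (auto intro!: derivative_eq_intros)

lemma theta_eq_affine:
  "0 \<le> cB \<Longrightarrow> theta \<kappa> vB cB z \<xi> = sqrt (\<kappa> * (vB - cB)) * \<xi> + sqrt (\<kappa> * cB) * z"
  unfolding theta_def by auto

lemma s_avg_lin_quadratic:
  fixes \<kappa> \<gamma> vB cB cBB xs z e :: real
  defines "k \<equiv> \<kappa> * (vB - cB)"
    and "m \<equiv> sqrt (\<kappa> * (vB - cB)) * (T_lin e (theta_star \<kappa> \<gamma> cB cBB xs z) - sqrt (\<kappa> * cB) * z)
               / (1 + \<kappa> * (vB - cB))"
  assumes "0 \<le> cB" "0 \<le> k" and g: "\<And>\<xi>. g \<xi> = u + v * \<xi> + w * \<xi>\<^sup>2"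
  shows "s_avg T_lin A_lin \<kappa> \<gamma> vB cB cBB xs z e g = u + v * m + w * (m\<^sup>2 + 1 / (1 + k))"
proof -
  define a where "a = sqrt (\<kappa> * (vB - cB))"
  define b where "b = sqrt (\<kappa> * cB) * z"
  define y where "y = T_lin e (theta_star \<kappa> \<gamma> cB cBB xs z)"
  have a2: "a\<^sup>2 = k"
    using \<open>0 \<le> k\<close> by (simp add: a_def k_def)
  have weight: "s_weight T_lin A_lin \<kappa> \<gamma> vB cB cBB xs z e \<xi>
      = 1 * exp (- ((1 + a\<^sup>2) * \<xi>\<^sup>2) / 2 + (a * (y - b)) * \<xi> + (y * b - b\<^sup>2 / 2))" for \<xi>
    unfolding s_weight_def theta_eq_affine[OF \<open>0 \<le> cB\<close>] A_lin_def
    by (simp add: a_def b_def y_def power2_eq_square field_simps)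
  have "s_avg T_lin A_lin \<kappa> \<gamma> vB cB cBB xs z e g
      = u + v * (a * (y - b) / (1 + a\<^sup>2)) + w * ((a * (y - b) / (1 + a\<^sup>2))\<^sup>2 + 1 / (1 + a\<^sup>2))"
    unfolding s_avg_def by (rule gaussian_weight_average_quadratic[OF _ _ weight g]) (auto intro: add_pos_nonneg)
  then show ?thesis
    unfolding a2 by (simp add: m_def a_def b_def y_def k_def)
qed

lemma
  fixes \<kappa> \<gamma> vB cB cBB xs z e :: real
  assumes "0 \<le> cB"
  shows S_theta_lin: "S_theta T_lin A_lin \<kappa> \<gamma> vB cB cBB xs z e
      = (\<lambda>\<xi>. (T_lin e (theta_star \<kappa> \<gamma> cB cBB xs z) - sqrt (\<kappa> * cB) * z) + (- sqrt (\<kappa> * (vB - cB))) * \<xi>)"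
    and S_theta_star_lin: "S_theta_star T_lin \<kappa> \<gamma> vB cB cBB xs z e
      = (\<lambda>\<xi>. sqrt (\<kappa> * cB) * z + sqrt (\<kappa> * (vB - cB)) * \<xi>)"
  unfolding S_theta_def S_theta_star_def theta_eq_affine[OF assms] by (auto simp: fun_eq_iff)

context
  fixes \<kappa> \<gamma> vB cB cBB xs z e :: real
  assumes cB: "0 \<le> cB" and k: "0 \<le> \<kappa> * (vB - cB)"
begin

lemma s_avg_lin_affine:
  "s_avg T_lin A_lin \<kappa> \<gamma> vB cB cBB xs z e (\<lambda>\<xi>. u + v * \<xi>)
   = u + v * (sqrt (\<kappa> * (vB - cB)) * (T_lin e (theta_star \<kappa> \<gamma> cB cBB xs z) - sqrt (\<kappa> * cB) * z)
              / (1 + \<kappa> * (vB - cB)))"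
  by (subst s_avg_lin_quadratic[OF cB k, where u = u and v = v and w = 0]) simp_all

lemma s_cov_lin_affine:
  "s_cov T_lin A_lin \<kappa> \<gamma> vB cB cBB xs z e (\<lambda>\<xi>. a0 + a1 * \<xi>) (\<lambda>\<xi>. b0 + b1 * \<xi>)
   = a1 * b1 / (1 + \<kappa> * (vB - cB))"
proof -
  define k where "k = \<kappa> * (vB - cB)"
  define m where "m = sqrt k * (T_lin e (theta_star \<kappa> \<gamma> cB cBB xs z) - sqrt (\<kappa> * cB) * z) / (1 + k)"
  have product: "s_avg T_lin A_lin \<kappa> \<gamma> vB cB cBB xs z e (\<lambda>\<xi>. (a0 + a1 * \<xi>) * (b0 + b1 * \<xi>))
      = a0 * b0 + (a0 * b1 + a1 * b0) * m + a1 * b1 * (m\<^sup>2 + 1 / (1 + k))"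
    unfolding m_def k_def
    by (rule s_avg_lin_quadratic[OF cB k]) (simp add: power2_eq_square algebra_simps)
  have affine: "s_avg T_lin A_lin \<kappa> \<gamma> vB cB cBB xs z e (\<lambda>\<xi>. u + v * \<xi>) = u + v * m" for u v
    unfolding m_def k_def by (rule s_avg_lin_affine)
  show ?thesis
    unfolding s_cov_def k_def[symmetric] product affine by (simp add: power2_eq_square algebra_simps)
qed

lemma r1_integrand_lin:
  "s_avg T_lin A_lin \<kappa> \<gamma> vB cB cBB xs z e (\<lambda>\<xi>. deriv (deriv A_lin) (theta \<kappa> vB cB z \<xi>))
     - s_var T_lin A_lin \<kappa> \<gamma> vB cB cBB xs z e (S_theta T_lin A_lin \<kappa> \<gamma> vB cB cBB xs z e)
   = 1 / (\<kappa> * (vB - cB) + 1)"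
  unfolding s_var_def S_theta_lin[OF cB] s_cov_lin_affine using s_avg_lin_affine[of 1 0] k
  by (simp add: field_simps)

lemma r2_integrand_lin:
  "s_cov T_lin A_lin \<kappa> \<gamma> vB cB cBB xs z e (S_theta_star T_lin \<kappa> \<gamma> vB cB cBB xs z e)
     (S_theta T_lin A_lin \<kappa> \<gamma> vB cB cBB xs z e)
   = - (\<kappa> * (vB - cB)) / (\<kappa> * (vB - cB) + 1)"
  unfolding S_theta_lin[OF cB] S_theta_star_lin[OF cB] s_cov_lin_affine using k
  by (simp add: add.commute)

lemma r3_integrand_lin:
  "(s_avg T_lin A_lin \<kappa> \<gamma> vB cB cBB xs z e (S_theta T_lin A_lin \<kappa> \<gamma> vB cB cBB xs z e))\<^sup>2
   = ((T_lin e (theta_star \<kappa> \<gamma> cB cBB xs z) - sqrt (\<kappa> * cB) * z) / (\<kappa> * (vB - cB) + 1))\<^sup>2"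
proof -
  define k where "k = \<kappa> * (vB - cB)"
  define Y where "Y = T_lin e (theta_star \<kappa> \<gamma> cB cBB xs z) - sqrt (\<kappa> * cB) * z"
  have "sqrt k * sqrt k = k"
    using k by (simp add: k_def)
  then have "Y + - sqrt k * (sqrt k * Y / (1 + k)) = Y / (k + 1)"
    using k by (simp add: k_def field_simps)
  then show ?thesis
    unfolding S_theta_lin[OF cB] s_avg_lin_affine k_def[symmetric] Y_def[symmetric] by simp
qed

end

section \<open>The order parameters \<open>r\<^sub>1, r\<^sub>2, r\<^sub>3\<close> in the linear model\<close>

lemma prob_space_Ge: "prob_space (gauss \<Otimes>\<^sub>M (gauss \<Otimes>\<^sub>M unif01))"
  by (intro prob_space_pair prob_space_gauss prob_space_unif01)

lemma E_Ge_const [simp]: "E_Ge (\<lambda>_ _ _. c) = c"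
  unfolding E_Ge_def using prob_space.prob_space[OF prob_space_Ge] by (simp add: split_beta')

lemma E_Ge_affine_square: "E_Ge (\<lambda>xs z e. (p * xs + q * z + Phi_inv e)\<^sup>2) = p\<^sup>2 + q\<^sup>2 + 1"
proof -
  interpret inner: pair_prob_space gauss unif01
    by (intro pair_prob_spaceI prob_space_gauss prob_space_unif01)
  interpret outer: pair_prob_space gauss "gauss \<Otimes>\<^sub>M unif01"
    by (intro pair_prob_spaceI prob_space_gauss prob_space_pair prob_space_unif01)
  have scaled: "integrable gauss (\<lambda>x. c * x)" "integrable gauss (\<lambda>x. (c * x)\<^sup>2)"
    "(\<integral>x. c * x \<partial>gauss) = 0" "(\<integral>x. (c * x)\<^sup>2 \<partial>gauss) = c\<^sup>2" for c
    using gauss_moments by (simp_all add: power_mult_distrib)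
  define Y where "Y = (\<lambda>(z, e). q * z + Phi_inv e)"
  have Y: "integrable (gauss \<Otimes>\<^sub>M unif01) Y" "integrable (gauss \<Otimes>\<^sub>M unif01) (\<lambda>y. (Y y)\<^sup>2)"
    "(\<integral>y. Y y \<partial>(gauss \<Otimes>\<^sub>M unif01)) = 0" "(\<integral>y. (Y y)\<^sup>2 \<partial>(gauss \<Otimes>\<^sub>M unif01)) = q\<^sup>2 + 1"
    unfolding Y_def
    using inner.integrable_product_add[OF scaled(1)[of q] unif01_Phi_inv_moments(1)]
      inner.integrable_product_add_square[OF scaled(1,2)[of q] unif01_Phi_inv_moments(1,3)]
      inner.integral_product_add[OF scaled(1)[of q] unif01_Phi_inv_moments(1)]
      inner.integral_product_add_square[OF scaled(1,2)[of q] unif01_Phi_inv_moments(1,3)]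
    by (simp_all add: split_beta' scaled gauss_moments unif01_Phi_inv_moments)
  have "E_Ge (\<lambda>xs z e. (p * xs + q * z + Phi_inv e)\<^sup>2) = (\<integral>(x, y). (p * x + Y y)\<^sup>2 \<partial>(gauss \<Otimes>\<^sub>M (gauss \<Otimes>\<^sub>M unif01)))"
    unfolding E_Ge_def Y_def by (simp add: split_beta' add.assoc)
  also have "\<dots> = p\<^sup>2 + q\<^sup>2 + 1"
    unfolding outer.integral_product_add_square[OF scaled(1,2) Y(1,2)] scaled Y by simp
  finally show ?thesis .
qed

lemma theta_star_residual:
  assumes "0 \<le> \<kappa>" "0 \<le> cB" "cBB\<^sup>2 \<le> \<gamma>\<^sup>2 * cB"
  obtains p q where "\<And>xs z. theta_star \<kappa> \<gamma> cB cBB xs z - sqrt (\<kappa> * cB) * z = p * xs + q * z"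
    and "p\<^sup>2 + q\<^sup>2 = \<kappa> * (\<gamma>\<^sup>2 + cB - 2 * cBB)"
proof (cases "0 < cB")
  case True
  define p where "p = sqrt (\<kappa> * (\<gamma>\<^sup>2 - cBB\<^sup>2 / cB))"
  define q where "q = cBB * sqrt (\<kappa> / cB) - sqrt (\<kappa> * cB)"
  have "cBB\<^sup>2 / cB \<le> \<gamma>\<^sup>2"
    using assms(3) True by (simp add: divide_le_eq mult.commute)
  then have "p\<^sup>2 = \<kappa> * (\<gamma>\<^sup>2 - cBB\<^sup>2 / cB)"
    unfolding p_def using assms(1) by simp
  moreover have "q\<^sup>2 = cBB\<^sup>2 * (\<kappa> / cB) - 2 * cBB * \<kappa> + \<kappa> * cB"
  proof -
    have "sqrt (\<kappa> / cB) * sqrt (\<kappa> * cB) = \<kappa>"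
      using True assms(1) by (simp add: real_sqrt_mult[symmetric])
    then show ?thesis
      unfolding q_def power2_diff power_mult_distrib using True assms(1) by (simp add: algebra_simps)
  qed
  ultimately show ?thesis
    by (intro that[of p q]) (use True in \<open>simp_all add: theta_star_def p_def q_def algebra_simps field_simps\<close>)
next
  case False
  with assms have "cB = 0" "cBB = 0" by simp_all
  then show ?thesis
    by (intro that[of "sqrt \<kappa> * \<gamma>" 0]) (use assms(1) in \<open>simp_all add: theta_star_def power_mult_distrib\<close>)
qed

lemma r3_nonneg: "0 \<le> r3 T A \<kappa> \<gamma> vB cB cBB"
  unfolding r3_def E_Ge_def by (rule integral_nonneg_AE) (simp add: split_beta')

lemma
  fixes \<kappa> \<gamma> vB cB cBB :: real
  assumes "0 \<le> cB" "0 \<le> \<kappa> * (vB - cB)"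
  shows r1_lin: "r1 T_lin A_lin \<kappa> \<gamma> vB cB cBB = 1 / (\<kappa> * (vB - cB) + 1)"
    and r2_lin: "r2 T_lin A_lin \<kappa> \<gamma> vB cB cBB = - (\<kappa> * (vB - cB)) / (\<kappa> * (vB - cB) + 1)"
  unfolding r1_def r2_def r1_integrand_lin[OF assms] r2_integrand_lin[OF assms] by simp_all

lemma r3_lin:
  fixes \<kappa> \<gamma> vB cB cBB :: real
  assumes "0 \<le> \<kappa>" "0 \<le> cB" "cB \<le> vB" "cBB\<^sup>2 \<le> \<gamma>\<^sup>2 * cB"
  shows "r3 T_lin A_lin \<kappa> \<gamma> vB cB cBB = (\<kappa> * (\<gamma>\<^sup>2 + cB - 2 * cBB) + 1) / (\<kappa> * (vB - cB) + 1)\<^sup>2"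
proof -
  have k: "0 \<le> \<kappa> * (vB - cB)"
    using assms by simp
  obtain p q where residual: "\<And>xs z. theta_star \<kappa> \<gamma> cB cBB xs z - sqrt (\<kappa> * cB) * z = p * xs + q * z"
    and pq: "p\<^sup>2 + q\<^sup>2 = \<kappa> * (\<gamma>\<^sup>2 + cB - 2 * cBB)"
    using theta_star_residual[OF assms(1,2,4)] by blast
  have "T_lin e (theta_star \<kappa> \<gamma> cB cBB xs z) - sqrt (\<kappa> * cB) * z = p * xs + q * z + Phi_inv e" for xs z e
    using residual[of xs z] unfolding T_lin_def by simp
  then have "r3 T_lin A_lin \<kappa> \<gamma> vB cB cBB
      = E_Ge (\<lambda>xs z e. (1 / (\<kappa> * (vB - cB) + 1))\<^sup>2 * (p * xs + q * z + Phi_inv e)\<^sup>2)"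
    unfolding r3_def r3_integrand_lin[OF assms(2) k] by (simp add: power_divide)
  also have "\<dots> = (1 / (\<kappa> * (vB - cB) + 1))\<^sup>2 * E_Ge (\<lambda>xs z e. (p * xs + q * z + Phi_inv e)\<^sup>2)"
    unfolding E_Ge_def by (simp add: split_beta')
  finally show ?thesis
    unfolding E_Ge_affine_square pq by (simp add: power_divide)
qed

section \<open>The \<open>h\<close>-side for a standard Gaussian \<open>\<mu>\<close>\<close>

lemma h_avg_gauss_quadratic:
  fixes r m u v w :: real
  assumes "0 < r" and g: "\<And>b. g b = u + v * b + w * b\<^sup>2"
  shows "h_avg gauss m (1 / r) g = u + v * (r * m / (1 + r)) + w * ((r * m / (1 + r))\<^sup>2 + 1 / (1 + r))"
proof -
  define E where "E = (\<lambda>b. exp (- (b - m)\<^sup>2 / (2 * (1 / r))))"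
  have [measurable]: "g \<in> borel_measurable borel"
    using g by (subst ext[OF g]) measurable
  have weight: "std_normal_density b * E b
      = (1 / sqrt (2 * pi)) * exp (- ((1 + r) * b\<^sup>2) / 2 + (r * m) * b + (- r * m\<^sup>2 / 2))" for b
  proof -
    have "- b\<^sup>2 / 2 + - (b - m)\<^sup>2 / (2 * (1 / r)) = - ((1 + r) * b\<^sup>2) / 2 + (r * m) * b + (- r * m\<^sup>2 / 2)"
      using \<open>0 < r\<close> by (simp add: field_simps power2_eq_square)
    then show ?thesis
      unfolding std_normal_density_def E_def by (simp only: mult.assoc exp_add[symmetric])
  qed
  have [measurable]: "E \<in> borel_measurable borel"
    unfolding E_def by measurable
  have "(\<integral>b. g b * E b \<partial>gauss) = (\<integral>b. g b * (std_normal_density b * E b) \<partial>lborel)"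
    "(\<integral>b. E b \<partial>gauss) = (\<integral>b. std_normal_density b * E b \<partial>lborel)"
    unfolding gauss_def by (subst integral_density; simp add: mult_ac)+
  then have "h_avg gauss m (1 / r) g
      = (\<integral>b. g b * (std_normal_density b * E b) \<partial>lborel) / (\<integral>b. std_normal_density b * E b \<partial>lborel)"
    unfolding h_avg_def E_def by simp
  also have "\<dots> = u + v * (r * m / (1 + r)) + w * ((r * m / (1 + r))\<^sup>2 + 1 / (1 + r))"
    by (rule gaussian_weight_average_quadratic[OF _ _ weight g]) (use \<open>0 < r\<close> in auto)
  finally show ?thesis .
qed

context
  fixes \<pi> :: "real measure" and \<gamma> :: real
  assumes pi_prob: "prob_space \<pi>" and pi_sets: "sets \<pi> = sets borel"
    and pi_mom: "integrable \<pi> (\<lambda>x. x\<^sup>2)" "(\<integral>x. x\<^sup>2 \<partial>\<pi>) = \<gamma>\<^sup>2"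
begin

lemma E_ZB_affine_moments:
  "E_ZB \<pi> (\<lambda>Z Bs. (a * Z + b * Bs)\<^sup>2 + c) = a\<^sup>2 + b\<^sup>2 * \<gamma>\<^sup>2 + c"
  "E_ZB \<pi> (\<lambda>Z Bs. Bs * (a * Z + b * Bs)) = b * \<gamma>\<^sup>2"
proof -
  interpret pi: prob_space \<pi> by (rule pi_prob)
  interpret P: pair_prob_space gauss \<pi>
    by (intro pair_prob_spaceI prob_space_gauss pi_prob)
  have [measurable]: "(\<lambda>x. x) \<in> borel_measurable \<pi>"
    by (simp add: measurable_cong_sets[OF pi_sets refl])
  have pi_mean: "integrable \<pi> (\<lambda>x. x)"
    using pi.square_integrable_imp_integrable[of "\<lambda>x. x"] pi_mom(1) by simp
  have scaled_gauss: "integrable gauss (\<lambda>x. a * x)" "integrable gauss (\<lambda>x. (a * x)\<^sup>2)"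
      "(\<integral>x. a * x \<partial>gauss) = 0" "(\<integral>x. (a * x)\<^sup>2 \<partial>gauss) = a\<^sup>2"
    using gauss_moments by (simp_all add: power_mult_distrib)
  have scaled_pi: "integrable \<pi> (\<lambda>x. b * x)" "integrable \<pi> (\<lambda>x. (b * x)\<^sup>2)"
      "(\<integral>x. (b * x)\<^sup>2 \<partial>\<pi>) = b\<^sup>2 * \<gamma>\<^sup>2"
    using pi_mean pi_mom by (simp_all add: power_mult_distrib)
  note square = P.integrable_product_add_square[OF scaled_gauss(1,2) scaled_pi(1,2)]
    P.integral_product_add_square[OF scaled_gauss(1,2) scaled_pi(1,2)]
  have "E_ZB \<pi> (\<lambda>Z Bs. (a * Z + b * Bs)\<^sup>2 + c) = (\<integral>p. (\<lambda>(x, y). (a * x + b * y)\<^sup>2) p + c \<partial>(gauss \<Otimes>\<^sub>M \<pi>))"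
    unfolding E_ZB_def by (simp add: split_beta')
  also have "\<dots> = (\<integral>(x, y). (a * x + b * y)\<^sup>2 \<partial>(gauss \<Otimes>\<^sub>M \<pi>)) + c"
    using square(1) by (subst Bochner_Integration.integral_add) (auto simp: P.prob_space)
  also have "\<dots> = a\<^sup>2 + b\<^sup>2 * \<gamma>\<^sup>2 + c"
    unfolding square(2) scaled_gauss scaled_pi by simp
  finally show "E_ZB \<pi> (\<lambda>Z Bs. (a * Z + b * Bs)\<^sup>2 + c) = a\<^sup>2 + b\<^sup>2 * \<gamma>\<^sup>2 + c" .
  have one: "integrable gauss (\<lambda>_. 1::real)" and pi_square: "integrable \<pi> (\<lambda>x. b * x\<^sup>2)"
    using pi_mom by auto
  have "(\<lambda>(Z, Bs). Bs * (a * Z + b * Bs)) = (\<lambda>p. (\<lambda>(Z, Bs). (a * Z) * Bs) p + (\<lambda>(Z, Bs). 1 * (b * Bs\<^sup>2)) p)"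
    by (auto simp: power2_eq_square algebra_simps)
  then have "E_ZB \<pi> (\<lambda>Z Bs. Bs * (a * Z + b * Bs))
      = (\<integral>x. a * x \<partial>gauss) * (\<integral>x. x \<partial>\<pi>) + (\<integral>x. 1 \<partial>gauss) * (\<integral>x. b * x\<^sup>2 \<partial>\<pi>)"
    unfolding E_ZB_def
    by (simp only: Bochner_Integration.integral_add P.integrable_product_mult P.integral_product_mult
        scaled_gauss(1) pi_mean one pi_square)
  then show "E_ZB \<pi> (\<lambda>Z Bs. Bs * (a * Z + b * Bs)) = b * \<gamma>\<^sup>2"
    using pi_mom gauss.prob_space by (simp add: gauss_moments gauss.borel_UNIV)
qed

context
  fixes q1 q2 q3 :: real
  assumes q1: "0 < q1" and q3: "0 \<le> q3"
begin

lemma h_avg_gauss_h_m: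
  defines "a \<equiv> sqrt q3 / (1 + q1)" and "b \<equiv> (q2 + 1) / (1 + q1)"
  assumes "\<And>x. g x = u + v * x + w * x\<^sup>2"
  shows "h_avg gauss (h_m 1 q1 q2 q3 Bs Z) (1 / q1) g
    = u + v * (a * Z + b * Bs) + w * ((a * Z + b * Bs)\<^sup>2 + 1 / (1 + q1))"
proof -
  have "q1 * h_m 1 q1 q2 q3 Bs Z = sqrt q3 * Z + (q2 + 1) * Bs"
    unfolding h_m_def h_alpha_def h_sigma_def using q1 by (simp add: field_simps)
  then have mean: "q1 * h_m 1 q1 q2 q3 Bs Z / (1 + q1) = a * Z + b * Bs"
    unfolding a_def b_def by (simp add: add_divide_distrib[symmetric])
  show ?thesis
    unfolding h_avg_gauss_quadratic[OF q1 assms(3)] mean ..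
qed

lemma
  defines "a \<equiv> sqrt q3 / (1 + q1)" and "b \<equiv> (q2 + 1) / (1 + q1)"
  shows h_cB_gauss: "h_cB \<pi> gauss 1 q1 q2 q3 = ((q2 + 1)\<^sup>2 * \<gamma>\<^sup>2 + q3) / (q1 + 1)\<^sup>2"
    and h_vB_gauss: "h_vB \<pi> gauss 1 q1 q2 q3 = 1 / (q1 + 1) + h_cB \<pi> gauss 1 q1 q2 q3"
    and h_cBB_gauss: "h_cBB \<pi> gauss 1 q1 q2 q3 = (q2 + 1) * \<gamma>\<^sup>2 / (q1 + 1)"
proof -
  note post = h_avg_gauss_h_m[folded a_def b_def]
  have "h_cB \<pi> gauss 1 q1 q2 q3 = E_ZB \<pi> (\<lambda>Z Bs. (a * Z + b * Bs)\<^sup>2 + 0)"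
    unfolding h_cB_def using post[where u = 0 and v = 1 and w = 0] by simp
  also have "\<dots> = a\<^sup>2 + b\<^sup>2 * \<gamma>\<^sup>2"
    using E_ZB_affine_moments(1)[of a b 0] by simp
  finally have cB: "h_cB \<pi> gauss 1 q1 q2 q3 = a\<^sup>2 + b\<^sup>2 * \<gamma>\<^sup>2" .
  then show "h_cB \<pi> gauss 1 q1 q2 q3 = ((q2 + 1)\<^sup>2 * \<gamma>\<^sup>2 + q3) / (q1 + 1)\<^sup>2"
    unfolding a_def b_def using q1 q3 by (simp add: power_divide add.commute add_divide_distrib[symmetric])
  have "h_vB \<pi> gauss 1 q1 q2 q3 = E_ZB \<pi> (\<lambda>Z Bs. (a * Z + b * Bs)\<^sup>2 + 1 / (1 + q1))"
    unfolding h_vB_def using post[where u = 0 and v = 0 and w = 1] by simp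
  then show "h_vB \<pi> gauss 1 q1 q2 q3 = 1 / (q1 + 1) + h_cB \<pi> gauss 1 q1 q2 q3"
    unfolding cB E_ZB_affine_moments(1) by simp
  have "h_avg gauss (h_m 1 q1 q2 q3 Bs Z) (1 / q1) (\<lambda>x. x * Bs) = Bs * (a * Z + b * Bs)" for Bs Z
    by (subst post[where u = 0 and v = Bs and w = 0]) simp_all
  then have "h_cBB \<pi> gauss 1 q1 q2 q3 = E_ZB \<pi> (\<lambda>Z Bs. Bs * (a * Z + b * Bs))"
    unfolding h_cBB_def by simp
  then show "h_cBB \<pi> gauss 1 q1 q2 q3 = (q2 + 1) * \<gamma>\<^sup>2 / (q1 + 1)"
    unfolding E_ZB_affine_moments(2) b_def by (simp add: add.commute)
qed

end

end

lemma fixed_point_r1: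
  fixes \<kappa> q :: real
  assumes "0 \<le> \<kappa>" "0 < q" and fixed: "q = 1 / (\<kappa> / (q + 1) + 1)"
  shows "q = sqrt ((\<kappa> / 2)\<^sup>2 + 1) - \<kappa> / 2"
proof -
  have "q * (q + 1 + \<kappa>) = q + 1"
    using fixed assms(1,2) by (simp add: field_simps)
  then have "(q + \<kappa> / 2)\<^sup>2 = (\<kappa> / 2)\<^sup>2 + 1"
    by (simp add: power2_eq_square algebra_simps)
  then have "sqrt ((\<kappa> / 2)\<^sup>2 + 1) = q + \<kappa> / 2"
    by (rule real_sqrt_unique) (use assms(1,2) in simp)
  then show ?thesis
    by simp
qed

theorem proposition2:
  fixes \<kappa> \<gamma> vB cB cBB :: real and \<pi> \<mu> :: "real measure"
  assumes kappa: "\<kappa> > 0" and gamma: "\<gamma> > 0"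
    and pi_prob: "prob_space \<pi>" and pi_sets: "sets \<pi> = sets borel"
    and pi_mom: "integrable \<pi> (\<lambda>x. x\<^sup>2)" "(\<integral>x. x\<^sup>2 \<partial>\<pi>) = \<gamma>\<^sup>2"
    and mu_prob: "prob_space \<mu>" and mu_sets: "sets \<mu> = sets borel"
    and adm: "0 \<le> cB" "cB \<le> vB" "cBB\<^sup>2 \<le> \<gamma>\<^sup>2 * cB"
  shows
    "(r1 T_lin A_lin \<kappa> \<gamma> vB cB cBB = 1 / (\<kappa> * (vB - cB) + 1)
     \<and> r2 T_lin A_lin \<kappa> \<gamma> vB cB cBB = - (\<kappa> * (vB - cB)) / (\<kappa> * (vB - cB) + 1)
     \<and> r3 T_lin A_lin \<kappa> \<gamma> vB cB cBB
         = (\<kappa> * (\<gamma>\<^sup>2 + cB - 2 * cBB) + 1) / (\<kappa> * (vB - cB) + 1)\<^sup>2)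
     \<and> (\<mu> = gauss \<and> (\<integral>x. x \<partial>\<pi>) = 0 \<longrightarrow>
     (let q1 = r1 T_lin A_lin \<kappa> \<gamma> vB cB cBB;
          q2 = r2 T_lin A_lin \<kappa> \<gamma> vB cB cBB;
          q3 = r3 T_lin A_lin \<kappa> \<gamma> vB cB cBB
      in h_vB \<pi> \<mu> 1 q1 q2 q3 = 1 / (q1 + 1) + h_cB \<pi> \<mu> 1 q1 q2 q3
       \<and> h_cB \<pi> \<mu> 1 q1 q2 q3 = ((q2 + 1)\<^sup>2 * \<gamma>\<^sup>2 + q3) / (q1 + 1)\<^sup>2
       \<and> h_cBB \<pi> \<mu> 1 q1 q2 q3 = (q2 + 1) * \<gamma>\<^sup>2 / (q1 + 1)))
     \<and> (\<mu> = gauss \<and> (\<integral>x. x \<partial>\<pi>) = 0 \<longrightarrow>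
     (let q1 = r1 T_lin A_lin \<kappa> \<gamma> vB cB cBB;
          q2 = r2 T_lin A_lin \<kappa> \<gamma> vB cB cBB;
          q3 = r3 T_lin A_lin \<kappa> \<gamma> vB cB cBB
      in vB = h_vB \<pi> \<mu> 1 q1 q2 q3 \<and> cB = h_cB \<pi> \<mu> 1 q1 q2 q3 \<and> cBB = h_cBB \<pi> \<mu> 1 q1 q2 q3
         \<longrightarrow> q1 = q2 + 1 \<and> q2 + 1 = sqrt ((\<kappa> / 2)\<^sup>2 + 1) - \<kappa> / 2))"
proof -
  define q1 where "q1 = r1 T_lin A_lin \<kappa> \<gamma> vB cB cBB"
  define q2 where "q2 = r2 T_lin A_lin \<kappa> \<gamma> vB cB cBB"
  define q3 where "q3 = r3 T_lin A_lin \<kappa> \<gamma> vB cB cBB"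
  have k: "0 \<le> \<kappa> * (vB - cB)"
    using kappa adm by simp
  have q1_val: "q1 = 1 / (\<kappa> * (vB - cB) + 1)" and q2_val: "q2 = - (\<kappa> * (vB - cB)) / (\<kappa> * (vB - cB) + 1)"
    and q3_val: "q3 = (\<kappa> * (\<gamma>\<^sup>2 + cB - 2 * cBB) + 1) / (\<kappa> * (vB - cB) + 1)\<^sup>2"
    unfolding q1_def q2_def q3_def
    using r1_lin[OF adm(1) k] r2_lin[OF adm(1) k] r3_lin[OF less_imp_le[OF kappa] adm] by simp_all
  have q1_pos: "0 < q1" and q2_q1: "q2 + 1 = q1"
    using k by (simp_all add: q1_val q2_val field_simps)
  have q3_nonneg: "0 \<le> q3"
    unfolding q3_def by (rule r3_nonneg)
  note h_gauss = h_cB_gauss[OF pi_prob pi_sets pi_mom q1_pos q3_nonneg]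
    h_vB_gauss[OF pi_prob pi_sets pi_mom q1_pos q3_nonneg]
    h_cBB_gauss[OF pi_prob pi_sets pi_mom q1_pos q3_nonneg]
  have fixed_point: "q1 = sqrt ((\<kappa> / 2)\<^sup>2 + 1) - \<kappa> / 2" if "vB - cB = 1 / (q1 + 1)"
    using fixed_point_r1[OF less_imp_le[OF kappa] q1_pos] q1_val unfolding that times_divide_eq_right mult_1_right by simp
  show ?thesis
    unfolding Let_def q1_def[symmetric] q2_def[symmetric] q3_def[symmetric]
    using q1_val[symmetric] q2_val[symmetric] q3_val[symmetric] h_gauss q2_q1 fixed_point by auto
qed

end
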